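(* Let $A$ be a finite set of actions and let $\{\pi_\theta\}_{\theta\in\mathbb{R}^d}$ be a family of probability distributions on $A$ with $\pi_\theta(a)>0$ and $\theta\mapsto\pi_\theta(a)$ differentiable for every $a\in A$. Let $R:A\to\mathbb{R}$ be the reward function, let $A$ also denote the random action drawn from $\pi_\theta$, and write $R=R(A)$. Define $\eta_s(\theta):=\mathbb{E}_{a\sim\pi_\theta}[R(a)]$, $g_s(\theta):=\nabla_\theta\eta_s(\theta)$ and $S_\theta(a):=\nabla_\theta\log\pi_\theta(a)$, and assume $\|S_\theta(a)\|\le G_{\max}$ and $|R(a)|\le R_{\max}$ for all $a\in A$. Suppose the rewards take values in an interval $[R_{lo},R_{hi}]\subseteq[-R_{\max},R_{\max}]$ which is partitioned into $B$ consecutive non-overlapping intervals $B_1,\dots,B_B$, each of the form $B_k=[b_k,b_k+\Delta)$ of common length $\Delta>0$, with midpoints $m_k:=b_k+\Delta/2$, and let the discretized reward be $\tilde R:=k$ if and only if $R\in B_k$. Then $$\|g_s(\theta)\|\le \sqrt{2}\,G_{\max}R_{\max}\sqrt{I(A;\tilde R)}+G_{\max}\Delta .$$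
   Context: One-shot game (horizon one): the state is fixed, the agent draws $a\sim\pi_\theta$ and receives reward $R(a)$. $\|\cdot\|$ is the Euclidean norm; $I(A;\tilde R)$ is the mutual information (natural logarithm) between the action $A\sim\pi_\theta$ and the bin index $\tilde R$. *)

theory Defs
  imports "HOL-Analysis.Analysis"
begin

definition grad :: "('a::real_inner \<Rightarrow> real) \<Rightarrow> 'a \<Rightarrow> 'a" where
  "grad f x = (THE D. GDERIV f x :> D)"

text \<open>Bin k (k = 0,...,B-1): the half-open interval [lo + k*delta, lo + (k+1)*delta).\<close>
definition bin :: "real \<Rightarrow> real \<Rightarrow> nat \<Rightarrow> real set" where
  "bin lo delta k = {lo + real k * delta ..< lo + real k * delta + delta}"

definition mutual_info :: "'x set \<Rightarrow> 'y set \<Rightarrow> ('x \<Rightarrow> 'y \<Rightarrow> real) \<Rightarrow> real" where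
  "mutual_info X Y p =
     (\<Sum>x\<in>X. \<Sum>y\<in>Y. if p x y = 0 then 0
        else p x y * ln (p x y / ((\<Sum>y'\<in>Y. p x y') * (\<Sum>x'\<in>X. p x' y))))"

end

theory Submission
  imports Defs
begin

(* Write K for the bin index of R(A) and f(k) for the left end point of bin k. By the
  log-derivative trick the gradient is E[R(A) S(A)], and E[S(A)] = 0 because the
  probabilities sum to 1. Replacing R(A) by f(K) changes E[R(A) S(A)] by at most
  Gmax * Delta. Since the score is centred, E[f(K) S(A)] is the difference of the
  expectations of f(k) S(a) under the joint law of (A, K) and under the product of its
  marginals, hence at most Gmax * Rmax times their L1 distance, which Pinsker's
  inequality bounds by sqrt (2 I(A; K)). *)

lemma grad_eqI:
  fixes f :: "'a::real_inner \<Rightarrow> real"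
  assumes "GDERIV f x :> D"
  shows "grad f x = D"
  unfolding grad_def
proof (rule the_equality)
  show "GDERIV f x :> D" by fact
  fix D' assume "GDERIV f x :> D'"
  then have "(\<lambda>h. h \<bullet> D') = (\<lambda>h. h \<bullet> D)"
    using assms unfolding gderiv_def by (rule has_derivative_unique)
  then show "D' = D" by (metis vector_eq_ldot)
qed

lemma GDERIV_grad:
  fixes f :: "'a::euclidean_space \<Rightarrow> real"
  assumes "f differentiable (at x)"
  shows "GDERIV f x :> grad f x"
proof -
  obtain L where L: "(f has_derivative L) (at x)"
    using assms by (auto simp: differentiable_def)
  have "L = (\<lambda>h. h \<bullet> adjoint L 1)"
    using adjoint_works[OF has_derivative_linear[OF L]] by (simp add: fun_eq_iff)
  then have "GDERIV f x :> adjoint L 1"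
    using L by (simp add: gderiv_def)
  then show ?thesis by (simp add: grad_eqI)
qed

lemma GDERIV_sum:
  assumes "\<And>i. i \<in> I \<Longrightarrow> GDERIV (f i) x :> D i"
  shows "GDERIV (\<lambda>x. \<Sum>i\<in>I. f i x) x :> (\<Sum>i\<in>I. D i)"
  using has_derivative_sum[of I f "\<lambda>i h. h \<bullet> D i"] assms
  by (simp add: gderiv_def inner_sum_right)

lemma grad_eq_scaleR_grad_ln:
  fixes f :: "'a::euclidean_space \<Rightarrow> real"
  assumes "f differentiable (at x)" and "f x > 0"
  shows "grad f x = f x *\<^sub>R grad (\<lambda>s. ln (f s)) x"
proof -
  have "GDERIV (\<lambda>s. ln (f s)) x :> (1 / f x) *\<^sub>R grad f x"
    using GDERIV_grad[OF assms(1)] DERIV_ln_divide[OF assms(2)] by (rule GDERIV_DERIV_compose)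
  then show ?thesis
    using assms(2) by (simp add: grad_eqI)
qed

lemma grad_sum_mult_const:
  fixes \<pi> :: "'a::euclidean_space \<Rightarrow> 'b \<Rightarrow> real"
  assumes "\<And>a. a \<in> A \<Longrightarrow> (\<lambda>s. \<pi> s a) differentiable (at x)"
  shows "grad (\<lambda>s. \<Sum>a\<in>A. \<pi> s a * c a) x = (\<Sum>a\<in>A. c a *\<^sub>R grad (\<lambda>s. \<pi> s a) x)"
proof (rule grad_eqI, rule GDERIV_sum)
  fix a assume "a \<in> A"
  then show "GDERIV (\<lambda>s. \<pi> s a * c a) x :> c a *\<^sub>R grad (\<lambda>s. \<pi> s a) x"
    using GDERIV_mult[OF GDERIV_grad[OF assms] GDERIV_const] by simp
qed

lemma sum_grad_eq_0_if_sum_const: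
  fixes \<pi> :: "'a::euclidean_space \<Rightarrow> 'b \<Rightarrow> real"
  assumes "\<And>a. a \<in> A \<Longrightarrow> (\<lambda>s. \<pi> s a) differentiable (at x)"
    and "\<And>s. (\<Sum>a\<in>A. \<pi> s a) = c"
  shows "(\<Sum>a\<in>A. grad (\<lambda>s. \<pi> s a) x) = 0"
proof -
  have "grad (\<lambda>s. \<Sum>a\<in>A. \<pi> s a * 1) x = (\<Sum>a\<in>A. 1 *\<^sub>R grad (\<lambda>s. \<pi> s a) x)"
    using assms(1) by (rule grad_sum_mult_const)
  then have "(\<Sum>a\<in>A. grad (\<lambda>s. \<pi> s a) x) = grad (\<lambda>s. \<Sum>a\<in>A. \<pi> s a) x"
    by simp
  also have "\<dots> = grad (\<lambda>s. c) x"
    using assms(2) by simp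
  also have "\<dots> = 0"
    by (rule grad_eqI) (rule GDERIV_const)
  finally show ?thesis .
qed

lemma ln_ge_rational:
  fixes x :: real
  assumes "x > 0"
  shows "(x - 1) * (5 * x + 1) / (2 * x * (x + 2)) \<le> ln x"
proof -
  define g where "g y = ln y - (y - 1) * (5 * y + 1) / (2 * y * (y + 2))" for y :: real
  have g': "\<And>y. y > 0 \<Longrightarrow> DERIV g y :> (y - 1) ^ 3 / (y\<^sup>2 * (y + 2)\<^sup>2)"
    unfolding g_def
    by (rule derivative_eq_intros refl | simp)+
       (simp add: divide_simps power2_eq_square power3_eq_cube add_pos_pos, simp add: algebra_simps)
  have "g 1 \<le> g x"
  proof (cases "x \<ge> 1")
    case True
    have "\<exists>d. DERIV g y :> d \<and> d \<ge> 0" if "1 \<le> y" for y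
      using g'[of y] that by (intro exI[of _ "(y - 1) ^ 3 / (y\<^sup>2 * (y + 2)\<^sup>2)"]) simp
    then show ?thesis
      using True by (metis DERIV_nonneg_imp_nondecreasing)
  next
    case False
    have "\<exists>d. DERIV g y :> d \<and> d \<le> 0" if "0 < y" "y \<le> 1" for y
      using g'[of y] that
      by (intro exI[of _ "(y - 1) ^ 3 / (y\<^sup>2 * (y + 2)\<^sup>2)"])
         (simp add: divide_nonpos_nonneg power_le_zero_eq)
    then show ?thesis
      using False assms by (metis DERIV_nonpos_imp_nonincreasing less_le_trans nle_le)
  qed
  then show ?thesis
    by (simp add: g_def)
qed

definition kl_divergence :: "'i set \<Rightarrow> ('i \<Rightarrow> real) \<Rightarrow> ('i \<Rightarrow> real) \<Rightarrow> real" where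
  "kl_divergence I p q = (\<Sum>i\<in>I. if p i = 0 then 0 else p i * ln (p i / q i))"

lemma pinsker_pointwise:
  fixes p q :: real
  assumes "p \<ge> 0" and "q > 0"
  shows "3 * (p - q)\<^sup>2 \<le> (2 * p + 4 * q) * ((if p = 0 then 0 else p * ln (p / q)) - p + q)"
proof (cases "p = 0")
  case True
  then show ?thesis
    using assms by (simp add: power2_eq_square)
next
  case False
  with assms have "p > 0" by simp
  have "(p - q) * (5 * p + q) / (2 * p * (p + 2 * q))
      = (p / q - 1) * (5 * (p / q) + 1) / (2 * (p / q) * (p / q + 2))"
    using \<open>p > 0\<close> assms by (simp add: divide_simps add_pos_pos)
  also have "\<dots> \<le> ln (p / q)"
    using \<open>p > 0\<close> assms by (intro ln_ge_rational) simp
  finally have "p * ((p - q) * (5 * p + q) / (2 * p * (p + 2 * q))) \<le> p * ln (p / q)"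
    using \<open>p > 0\<close> by (intro mult_left_mono) simp_all
  then have "(p - q) * (5 * p + q) / (2 * (p + 2 * q)) \<le> p * ln (p / q)"
    using \<open>p > 0\<close> by simp
  then have "(2 * p + 4 * q) * ((p - q) * (5 * p + q) / (2 * (p + 2 * q)) - p + q)
      \<le> (2 * p + 4 * q) * (p * ln (p / q) - p + q)"
    using \<open>p > 0\<close> assms by (intro mult_left_mono) auto
  also have "(2 * p + 4 * q) * ((p - q) * (5 * p + q) / (2 * (p + 2 * q)) - p + q) = 3 * (p - q)\<^sup>2"
    using \<open>p > 0\<close> assms by (simp add: field_simps power2_eq_square)
  finally show ?thesis
    using False by simp
qed

lemma pinsker:
  fixes p q :: "'i \<Rightarrow> real"
  assumes "finite I"
    and p_nonneg: "\<And>i. i \<in> I \<Longrightarrow> p i \<ge> 0"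
    and q_nonneg: "\<And>i. i \<in> I \<Longrightarrow> q i \<ge> 0"
    and abs_cont: "\<And>i. i \<in> I \<Longrightarrow> q i = 0 \<Longrightarrow> p i = 0"
    and "sum p I = 1" and "sum q I = 1"
  shows "(\<Sum>i\<in>I. \<bar>p i - q i\<bar>) \<le> sqrt 2 * sqrt (kl_divergence I p q)"
proof -
  define w where "w i = (2 * p i + 4 * q i) / 3" for i
  define d where "d i = (if p i = 0 then 0 else p i * ln (p i / q i)) - p i + q i" for i
  have pointwise: "w i \<ge> 0 \<and> d i \<ge> 0 \<and> \<bar>p i - q i\<bar> \<le> sqrt (w i) * sqrt (d i)" if "i \<in> I" for i
  proof (cases "q i = 0")
    case True
    then show ?thesis
      using abs_cont that by (simp add: w_def d_def)
  next
    case False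
    with q_nonneg that have "q i > 0" by (simp add: less_le)
    with p_nonneg that have "w i > 0" by (simp add: w_def add_nonneg_pos)
    have "(p i - q i)\<^sup>2 \<le> w i * d i"
      using pinsker_pointwise[OF p_nonneg[OF that] \<open>q i > 0\<close>] by (simp add: w_def d_def)
    moreover from this \<open>w i > 0\<close> have "d i \<ge> 0"
      by (metis order_trans zero_le_power2 zero_le_mult_iff not_less)
    ultimately show ?thesis
      using \<open>w i > 0\<close> by (metis less_imp_le real_sqrt_abs real_sqrt_le_mono real_sqrt_mult)
  qed
  have "(\<Sum>i\<in>I. \<bar>p i - q i\<bar>) \<le> (\<Sum>i\<in>I. sqrt (w i) * sqrt (d i))"
    using pointwise by (intro sum_mono) blast
  also have "\<dots> \<le> sqrt ((\<Sum>i\<in>I. w i) * (\<Sum>i\<in>I. d i))"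
  proof (rule real_le_rsqrt)
    have "(\<Sum>i\<in>I. sqrt (w i) * sqrt (d i))\<^sup>2 \<le> (\<Sum>i\<in>I. (sqrt (w i))\<^sup>2) * (\<Sum>i\<in>I. (sqrt (d i))\<^sup>2)"
      by (rule Cauchy_Schwarz_ineq_sum)
    also have "\<dots> = (\<Sum>i\<in>I. w i) * (\<Sum>i\<in>I. d i)"
      using pointwise by (simp cong: sum.cong)
    finally show "(\<Sum>i\<in>I. sqrt (w i) * sqrt (d i))\<^sup>2 \<le> (\<Sum>i\<in>I. w i) * (\<Sum>i\<in>I. d i)" .
  qed
  also have "(\<Sum>i\<in>I. w i) = 2"
    using assms(5,6) by (simp add: w_def sum_divide_distrib[symmetric] sum.distrib sum_distrib_left[symmetric])
  also have "(\<Sum>i\<in>I. d i) = kl_divergence I p q"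
    using assms(5,6) by (simp add: d_def kl_divergence_def sum.distrib sum_subtractf)
  finally show ?thesis
    by (simp add: real_sqrt_mult)
qed

lemma mutual_info_eq_kl_divergence:
  "mutual_info X Y p
     = kl_divergence (X \<times> Y) (case_prod p) (\<lambda>(x, y). (\<Sum>y'\<in>Y. p x y') * (\<Sum>x'\<in>X. p x' y))"
  unfolding mutual_info_def kl_divergence_def sum.cartesian_product by (intro sum.cong) auto

lemma sum_abs_diff_product_marginals_le_mutual_info:
  fixes p :: "'x \<Rightarrow> 'y \<Rightarrow> real"
  assumes "finite X" and "finite Y"
    and nonneg: "\<And>x y. x \<in> X \<Longrightarrow> y \<in> Y \<Longrightarrow> p x y \<ge> 0"
    and total: "(\<Sum>x\<in>X. \<Sum>y\<in>Y. p x y) = 1"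
  shows "(\<Sum>x\<in>X. \<Sum>y\<in>Y. \<bar>p x y - (\<Sum>y'\<in>Y. p x y') * (\<Sum>x'\<in>X. p x' y)\<bar>)
           \<le> sqrt 2 * sqrt (mutual_info X Y p)"
proof -
  define q where "q x y = (\<Sum>y'\<in>Y. p x y') * (\<Sum>x'\<in>X. p x' y)" for x y
  have q_nonneg: "q x y \<ge> 0" if "x \<in> X" "y \<in> Y" for x y
    using nonneg that by (simp add: q_def sum_nonneg)
  have q_eq_0: "p x y = 0" if "x \<in> X" "y \<in> Y" "q x y = 0" for x y
  proof -
    from \<open>q x y = 0\<close> have "(\<Sum>y'\<in>Y. p x y') = 0 \<or> (\<Sum>x'\<in>X. p x' y) = 0"
      by (simp add: q_def)
    then show ?thesis
      using that nonneg assms(1,2) by (auto simp: sum_nonneg_eq_0_iff)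
  qed
  have "(\<Sum>y\<in>Y. \<Sum>x\<in>X. p x y) = 1"
    using total by (simp add: sum.swap[of _ Y])
  then have q_total: "(\<Sum>x\<in>X. \<Sum>y\<in>Y. q x y) = 1"
    using total by (simp add: q_def sum_product[symmetric])
  have "(\<Sum>i\<in>X \<times> Y. \<bar>case_prod p i - case_prod q i\<bar>)
      \<le> sqrt 2 * sqrt (kl_divergence (X \<times> Y) (case_prod p) (case_prod q))"
    using assms(1,2) nonneg q_nonneg q_eq_0 total q_total
    by (intro pinsker) (auto simp: sum.cartesian_product)
  moreover have "(\<Sum>x\<in>X. \<Sum>y\<in>Y. \<bar>p x y - q x y\<bar>) = (\<Sum>i\<in>X \<times> Y. \<bar>case_prod p i - case_prod q i\<bar>)"
    unfolding sum.cartesian_product by (intro sum.cong) auto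
  moreover have "kl_divergence (X \<times> Y) (case_prod p) (case_prod q) = mutual_info X Y p"
    by (simp add: mutual_info_eq_kl_divergence q_def case_prod_unfold)
  ultimately show ?thesis
    by (simp add: q_def)
qed

lemma norm_sum_le_sum_abs_diff_product_marginals:
  fixes S :: "'x \<Rightarrow> 'v::real_normed_vector"
  assumes centered: "(\<Sum>x\<in>X. (\<Sum>y\<in>Y. p x y) *\<^sub>R S x) = 0"
    and S_bound: "\<And>x. x \<in> X \<Longrightarrow> norm (S x) \<le> G"
    and f_bound: "\<And>y. y \<in> Y \<Longrightarrow> \<bar>f y\<bar> \<le> M"
  shows "norm (\<Sum>x\<in>X. \<Sum>y\<in>Y. (p x y * f y) *\<^sub>R S x)
           \<le> G * M * (\<Sum>x\<in>X. \<Sum>y\<in>Y. \<bar>p x y - (\<Sum>y'\<in>Y. p x y') * (\<Sum>x'\<in>X. p x' y)\<bar>)"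
proof -
  define px where "px x = (\<Sum>y\<in>Y. p x y)" for x
  define py where "py y = (\<Sum>x\<in>X. p x y)" for y
  define q where "q x y = px x * py y" for x y
  have "(\<Sum>x\<in>X. \<Sum>y\<in>Y. (q x y * f y) *\<^sub>R S x) = (\<Sum>x\<in>X. (\<Sum>y\<in>Y. py y * f y) *\<^sub>R px x *\<^sub>R S x)"
    by (simp add: q_def scaleR_sum_left sum_distrib_left mult_ac)
  also have "\<dots> = (\<Sum>y\<in>Y. py y * f y) *\<^sub>R (\<Sum>x\<in>X. px x *\<^sub>R S x)"
    by (simp add: scaleR_sum_right)
  also have "\<dots> = 0"
    using centered by (simp add: px_def)
  finally have "(\<Sum>x\<in>X. \<Sum>y\<in>Y. (p x y * f y) *\<^sub>R S x)
      = (\<Sum>x\<in>X. \<Sum>y\<in>Y. ((p x y - q x y) * f y) *\<^sub>R S x)"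
    by (simp add: left_diff_distrib scaleR_left_diff_distrib sum_subtractf)
  also have "norm \<dots> \<le> (\<Sum>x\<in>X. \<Sum>y\<in>Y. norm (((p x y - q x y) * f y) *\<^sub>R S x))"
    by (intro norm_sum[THEN order_trans] sum_mono norm_sum)
  also have "\<dots> \<le> (\<Sum>x\<in>X. \<Sum>y\<in>Y. \<bar>p x y - q x y\<bar> * (M * G))"
  proof (intro sum_mono)
    fix x y assume "x \<in> X" "y \<in> Y"
    then have "\<bar>f y\<bar> * norm (S x) \<le> M * G"
      using S_bound f_bound by (intro mult_mono) (auto intro: order_trans[OF abs_ge_zero])
    then show "norm (((p x y - q x y) * f y) *\<^sub>R S x) \<le> \<bar>p x y - q x y\<bar> * (M * G)"
      by (simp add: abs_mult mult.assoc mult_left_mono)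
  qed
  finally show ?thesis
    by (simp add: q_def px_def py_def sum_distrib_left sum_distrib_right mult_ac)
qed

lemma norm_sum_deviation_le:
  fixes S :: "'x \<Rightarrow> 'v::real_normed_vector"
  assumes nonneg: "\<And>x y. x \<in> X \<Longrightarrow> y \<in> Y \<Longrightarrow> p x y \<ge> 0"
    and total: "(\<Sum>x\<in>X. \<Sum>y\<in>Y. p x y) = 1"
    and S_bound: "\<And>x. x \<in> X \<Longrightarrow> norm (S x) \<le> G"
    and close: "\<And>x y. x \<in> X \<Longrightarrow> y \<in> Y \<Longrightarrow> p x y \<noteq> 0 \<Longrightarrow> \<bar>g x - f y\<bar> \<le> \<Delta>"
  shows "norm (\<Sum>x\<in>X. \<Sum>y\<in>Y. (p x y * (g x - f y)) *\<^sub>R S x) \<le> G * \<Delta>"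
proof -
  have "norm (\<Sum>x\<in>X. \<Sum>y\<in>Y. (p x y * (g x - f y)) *\<^sub>R S x)
      \<le> (\<Sum>x\<in>X. \<Sum>y\<in>Y. norm ((p x y * (g x - f y)) *\<^sub>R S x))"
    by (intro norm_sum[THEN order_trans] sum_mono norm_sum)
  also have "\<dots> \<le> (\<Sum>x\<in>X. \<Sum>y\<in>Y. p x y * (G * \<Delta>))"
  proof (intro sum_mono)
    fix x y assume xy: "x \<in> X" "y \<in> Y"
    show "norm ((p x y * (g x - f y)) *\<^sub>R S x) \<le> p x y * (G * \<Delta>)"
    proof (cases "p x y = 0")
      case False
      then have "norm (S x) * \<bar>g x - f y\<bar> \<le> G * \<Delta>"
        using xy S_bound close by (intro mult_mono) (auto intro: order_trans[OF norm_ge_zero])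
      then have "p x y * (norm (S x) * \<bar>g x - f y\<bar>) \<le> p x y * (G * \<Delta>)"
        using xy nonneg by (intro mult_left_mono) auto
      then show ?thesis
        using xy nonneg by (simp add: abs_mult mult_ac)
    qed simp
  qed
  also have "\<dots> = G * \<Delta>"
    using total by (simp add: sum_distrib_right[symmetric])
  finally show ?thesis .
qed

lemma norm_score_sum_le_mutual_info:
  fixes S :: "'x \<Rightarrow> 'v::real_normed_vector"
  assumes "finite X" and "finite Y"
    and nonneg: "\<And>x y. x \<in> X \<Longrightarrow> y \<in> Y \<Longrightarrow> p x y \<ge> 0"
    and total: "(\<Sum>x\<in>X. \<Sum>y\<in>Y. p x y) = 1"
    and centered: "(\<Sum>x\<in>X. (\<Sum>y\<in>Y. p x y) *\<^sub>R S x) = 0"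
    and S_bound: "\<And>x. x \<in> X \<Longrightarrow> norm (S x) \<le> G"
    and f_bound: "\<And>y. y \<in> Y \<Longrightarrow> \<bar>f y\<bar> \<le> M"
    and close: "\<And>x y. x \<in> X \<Longrightarrow> y \<in> Y \<Longrightarrow> p x y \<noteq> 0 \<Longrightarrow> \<bar>g x - f y\<bar> \<le> \<Delta>"
  shows "norm (\<Sum>x\<in>X. g x *\<^sub>R (\<Sum>y\<in>Y. p x y) *\<^sub>R S x)
           \<le> sqrt 2 * G * M * sqrt (mutual_info X Y p) + G * \<Delta>"
proof -
  from total have "X \<noteq> {}" and "Y \<noteq> {}"
    by auto
  then obtain x0 y0 where "x0 \<in> X" and "y0 \<in> Y"
    by blast
  then have "G \<ge> 0" and "M \<ge> 0"
    using S_bound[of x0] f_bound[of y0]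
    by (auto intro: order_trans[OF norm_ge_zero] order_trans[OF abs_ge_zero])
  then have "G * M \<ge> 0"
    by simp
  have "g x *\<^sub>R (\<Sum>y\<in>Y. p x y) *\<^sub>R S x
      = (\<Sum>y\<in>Y. (p x y * (g x - f y)) *\<^sub>R S x + (p x y * f y) *\<^sub>R S x)" for x
    by (simp add: scaleR_left_distrib[symmetric] scaleR_sum_left[symmetric] sum_distrib_left
        right_diff_distrib mult_ac)
  then have "(\<Sum>x\<in>X. g x *\<^sub>R (\<Sum>y\<in>Y. p x y) *\<^sub>R S x)
      = (\<Sum>x\<in>X. \<Sum>y\<in>Y. (p x y * (g x - f y)) *\<^sub>R S x) + (\<Sum>x\<in>X. \<Sum>y\<in>Y. (p x y * f y) *\<^sub>R S x)"
    by (simp add: sum.distrib)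
  also have "norm \<dots> \<le> G * \<Delta> + G * M * (sqrt 2 * sqrt (mutual_info X Y p))"
  proof (rule norm_triangle_le[OF add_mono])
    show "norm (\<Sum>x\<in>X. \<Sum>y\<in>Y. (p x y * (g x - f y)) *\<^sub>R S x) \<le> G * \<Delta>"
      using nonneg total S_bound close by (rule norm_sum_deviation_le)
    have "norm (\<Sum>x\<in>X. \<Sum>y\<in>Y. (p x y * f y) *\<^sub>R S x)
        \<le> G * M * (\<Sum>x\<in>X. \<Sum>y\<in>Y. \<bar>p x y - (\<Sum>y'\<in>Y. p x y') * (\<Sum>x'\<in>X. p x' y)\<bar>)"
      using centered S_bound f_bound by (rule norm_sum_le_sum_abs_diff_product_marginals)
    also have "\<dots> \<le> G * M * (sqrt 2 * sqrt (mutual_info X Y p))"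
      using assms(1-4) \<open>G * M \<ge> 0\<close>
      by (intro mult_left_mono sum_abs_diff_product_marginals_le_mutual_info) auto
    finally show "norm (\<Sum>x\<in>X. \<Sum>y\<in>Y. (p x y * f y) *\<^sub>R S x)
        \<le> G * M * (sqrt 2 * sqrt (mutual_info X Y p))" .
  qed
  finally show ?thesis
    by (simp add: mult_ac)
qed

lemma mem_bin_iff:
  assumes "\<Delta> > 0"
  shows "r \<in> bin lo \<Delta> k \<longleftrightarrow> \<lfloor>(r - lo) / \<Delta>\<rfloor> = int k"
  using assms by (simp add: bin_def floor_eq_iff pos_le_divide_eq pos_divide_less_eq algebra_simps)

lemma sum_bin_indicator:
  assumes "\<Delta> > 0" and "k < B" and "r \<in> bin lo \<Delta> k"
  shows "(\<Sum>j<B. if r \<in> bin lo \<Delta> j then 1 else 0) = (1::real)"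
  using assms by (simp add: mem_bin_iff)

lemma abs_bin_left_end_le:
  fixes lo \<Delta> M :: real
  assumes "- M \<le> lo" and "lo + real B * \<Delta> \<le> M" and "\<Delta> \<ge> 0" and "k < B"
  shows "\<bar>lo + real k * \<Delta>\<bar> \<le> M"
proof -
  have "0 \<le> real k * \<Delta>" and "real k * \<Delta> \<le> real B * \<Delta>"
    using assms by (simp_all add: mult_right_mono)
  then show ?thesis
    using assms unfolding abs_le_iff by linarith
qed

theorem theorem2:
  fixes A :: "'a set"
    and \<pi> :: "real^'d \<Rightarrow> 'a \<Rightarrow> real"
    and R :: "'a \<Rightarrow> real"
    and \<theta> :: "real^'d"
    and Gmax Rmax Rlo Rhi \<Delta> :: real
    and B :: nat
  assumes finA: "finite A"
    and pos: "\<forall>t. \<forall>a\<in>A. \<pi> t a > 0"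
    and distr: "\<forall>t. (\<Sum>a\<in>A. \<pi> t a) = 1"
    and diff: "\<forall>t. \<forall>a\<in>A. (\<lambda>s. \<pi> s a) differentiable (at t)"
    and score_bd: "\<forall>t. \<forall>a\<in>A. norm (grad (\<lambda>s. ln (\<pi> s a)) t) \<le> Gmax"
    and rew_bd: "\<forall>a\<in>A. \<bar>R a\<bar> \<le> Rmax"
    and rew_range: "\<forall>a\<in>A. Rlo \<le> R a \<and> R a \<le> Rhi"
    and interval: "-Rmax \<le> Rlo" "Rlo \<le> Rhi" "Rhi \<le> Rmax"
    and delta_pos: "\<Delta> > 0"
    and B_pos: "B \<ge> 1"
    and partition: "Rhi = Rlo + real B * \<Delta>"
    and binned: "\<forall>a\<in>A. \<exists>k<B. R a \<in> bin Rlo \<Delta> k"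
  shows "norm (grad (\<lambda>t. \<Sum>a\<in>A. \<pi> t a * R a) \<theta>)
           \<le> sqrt 2 * Gmax * Rmax *
               sqrt (mutual_info A {..<B}
                       (\<lambda>a k. \<pi> \<theta> a * (if R a \<in> bin Rlo \<Delta> k then 1 else 0)))
             + Gmax * \<Delta>"
proof -
  define S where "S a = grad (\<lambda>s. ln (\<pi> s a)) \<theta>" for a
  define p where "p = (\<lambda>a k. \<pi> \<theta> a * (if R a \<in> bin Rlo \<Delta> k then 1 else 0))"
  have marginal: "(\<Sum>k<B. p a k) = \<pi> \<theta> a" if "a \<in> A" for a
    using binned that delta_pos by (auto simp: p_def sum_distrib_left[symmetric] sum_bin_indicator)
  have grad_\<pi>: "grad (\<lambda>s. \<pi> s a) \<theta> = \<pi> \<theta> a *\<^sub>R S a" if "a \<in> A" for a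
    unfolding S_def using diff pos that by (simp add: grad_eq_scaleR_grad_ln)
  have "grad (\<lambda>t. \<Sum>a\<in>A. \<pi> t a * R a) \<theta> = (\<Sum>a\<in>A. R a *\<^sub>R (\<Sum>k<B. p a k) *\<^sub>R S a)"
    using diff grad_\<pi> marginal by (simp add: grad_sum_mult_const)
  moreover have "norm (\<Sum>a\<in>A. R a *\<^sub>R (\<Sum>k<B. p a k) *\<^sub>R S a)
      \<le> sqrt 2 * Gmax * Rmax * sqrt (mutual_info A {..<B} p) + Gmax * \<Delta>"
  proof (rule norm_score_sum_le_mutual_info[where f = "\<lambda>k. Rlo + real k * \<Delta>"])
    show "(\<Sum>a\<in>A. \<Sum>k<B. p a k) = 1"
      using marginal distr by simp
    have "(\<Sum>a\<in>A. \<pi> \<theta> a *\<^sub>R S a) = 0"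
      using sum_grad_eq_0_if_sum_const[of A \<pi> \<theta> 1] diff distr grad_\<pi> by simp
    then show "(\<Sum>a\<in>A. (\<Sum>k<B. p a k) *\<^sub>R S a) = 0"
      using marginal by simp
    show "\<bar>Rlo + real k * \<Delta>\<bar> \<le> Rmax" if "k \<in> {..<B}" for k
      using interval partition delta_pos that by (intro abs_bin_left_end_le) auto
  qed (use finA pos score_bd in \<open>auto simp: p_def S_def bin_def less_imp_le split: if_splits\<close>)
  ultimately show ?thesis
    by (simp add: p_def)
qed

end
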